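(* For $\psi=\log$ one has $\frac12\le C_{\log}\le1$, and for $\psi=\sqrt{\cdot}$ one has $C_{\sqrt{\cdot}}=0$.
   Context: For $\psi\in C^1((0,\infty))$ and $x,y>0$, $\widetilde{\psi}(x,y):=[\psi'(x)+\psi'(y)](1-xy)+x[\psi(y)-\psi(1/x)]+y[\psi(x)-\psi(1/y)]$, and $C_\psi:=\inf\frac{\widetilde{\psi}(x,y)}{(\psi(x)+\psi(y)-2\psi(1))^2}$, the infimum taken over all $x,y>0$ with $\psi(x)+\psi(y)\neq2\psi(1)$. *)

theory Defs
  imports "HOL-Analysis.Analysis" "HOL-Library.Extended_Real"
begin

definition psi_tilde :: "(real \<Rightarrow> real) \<Rightarrow> real \<Rightarrow> real \<Rightarrow> real" where
  "psi_tilde psi x y =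
     (deriv psi x + deriv psi y) * (1 - x * y) + x * (psi y - psi (1 / x)) + y * (psi x - psi (1 / y))"

text \<open>The infimum is taken in the extended reals, so it is the genuine infimum
  (possibly minus infinity).\<close>
definition C_psi :: "(real \<Rightarrow> real) \<Rightarrow> ereal" where
  "C_psi psi = (INF p \<in> {(x, y). x > 0 \<and> y > 0 \<and> psi x + psi y \<noteq> 2 * psi 1}.
      ereal (psi_tilde psi (fst p) (snd p) / (psi (fst p) + psi (snd p) - 2 * psi 1)^2))"

end

theory Submission
  imports Defs
begin

text \<open>For \<open>\<psi> = ln\<close> put \<open>S = ln (x y)\<close> and \<open>u = S/2\<close>, so \<open>e\<^sup>u = \<surd>(x y)\<close>. Then
  \<open>\<psi>\<^sup>~(x, y) = (x + y)(e\<^sup>-\<^sup>S - 1 + S)\<close>; the second factor is nonnegative and AM-GM gives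
  \<open>x + y \<ge> 2 e\<^sup>u\<close>, hence \<open>\<psi>\<^sup>~ \<ge> 2 (e\<^sup>-\<^sup>u - e\<^sup>u + 2 u e\<^sup>u) \<ge> 2 u\<^sup>2 = S\<^sup>2/2\<close>. The last inequality holds
  because the derivative of the difference is \<open>(e\<^sup>u - 1)(1 + e\<^sup>-\<^sup>u + 2 u)\<close>, whose second factor
  is positive, so the difference is minimal at \<open>u = 0\<close>. The point \<open>x = y = 1/2\<close> gives
  \<open>C\<^sub>l\<^sub>n \<le> 1\<close>. For \<open>\<psi> = \<surd>\<close>, with \<open>a = \<surd>x, b = \<surd>y\<close> one has
  \<open>\<psi>\<^sup>~ = (a + b)(a b - 1)\<^sup>2 / (2 a b) \<ge> 0\<close>, which vanishes at \<open>x = 4, y = 1/4\<close>.\<close>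

lemma C_psi_greatest:
  assumes "\<And>x y. 0 < x \<Longrightarrow> 0 < y \<Longrightarrow> psi x + psi y \<noteq> 2 * psi 1 \<Longrightarrow>
             c \<le> psi_tilde psi x y / (psi x + psi y - 2 * psi 1)\<^sup>2"
  shows "ereal c \<le> C_psi psi"
  unfolding C_psi_def by (rule INF_greatest) (auto intro: assms)

lemma C_psi_le:
  assumes "0 < x" "0 < y" "psi x + psi y \<noteq> 2 * psi 1"
  shows "C_psi psi \<le> ereal (psi_tilde psi x y / (psi x + psi y - 2 * psi 1)\<^sup>2)"
  unfolding C_psi_def by (rule INF_lower2[of "(x, y)"]) (use assms in auto)

lemma exp_minus_plus_twice_pos: "0 < 1 + exp (-u) + 2 * (u::real)"
proof (cases "0 \<le> u")
  case True
  then show ?thesis by (simp add: add_pos_nonneg)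
next
  case False
  then have "1 - u + u\<^sup>2 / 2 \<le> exp (-u)"
    using exp_lower_Taylor_quadratic[of "-u"] by simp
  moreover have "0 < 2 + u + u\<^sup>2 / 2"
    using sum_power2_ge_zero[of "u + 1" 0] by (simp add: power2_eq_square algebra_simps)
  ultimately show ?thesis by linarith
qed

lemma exp_gap_ge_square: "(u::real)\<^sup>2 \<le> exp (-u) - exp u + 2 * u * exp u"
proof -
  define f where "f u = exp (-u) - exp u + 2 * u * exp u - u\<^sup>2" for u :: real
  have deriv: "(f has_real_derivative (exp v - 1) * (1 + exp (-v) + 2 * v)) (at v)" for v
    unfolding f_def
    by (auto intro!: derivative_eq_intros simp: algebra_simps exp_minus field_simps)
  have "f 0 \<le> f u"
  proof (cases "0 \<le> u")
    case True
    show ?thesis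
    proof (rule deriv_nonneg_imp_mono[OF deriv])
      fix v assume "v \<in> {0..u}"
      then show "0 \<le> (exp v - 1) * (1 + exp (-v) + 2 * v)"
        using exp_minus_plus_twice_pos[of v] by simp
    qed (use True in auto)
  next
    case False
    show ?thesis
    proof (rule deriv_nonpos_imp_antimono[OF deriv])
      fix v assume "v \<in> {u..0}"
      then show "(exp v - 1) * (1 + exp (-v) + 2 * v) \<le> 0"
        using exp_minus_plus_twice_pos[of v] by (simp add: mult_nonpos_nonneg)
    qed (use False in auto)
  qed
  then show ?thesis by (simp add: f_def)
qed

lemma deriv_ln: "0 < x \<Longrightarrow> deriv ln x = 1 / (x::real)"
  using DERIV_imp_deriv[OF DERIV_ln[of x]] by (simp add: inverse_eq_divide)

lemma deriv_sqrt: "0 < x \<Longrightarrow> deriv sqrt x = inverse (sqrt x) / 2"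
  by (rule DERIV_imp_deriv) (rule DERIV_real_sqrt)

lemma psi_tilde_ln:
  assumes "0 < x" "0 < y"
  shows "psi_tilde ln x y = (x + y) * (1 / (x * y) - 1 + ln (x * y))"
  unfolding psi_tilde_def using assms by (simp add: deriv_ln ln_div ln_mult field_simps)

lemma psi_tilde_ln_ge:
  assumes x: "0 < x" and y: "0 < y"
  shows "(ln x + ln y)\<^sup>2 / 2 \<le> psi_tilde ln x y"
proof -
  define u where "u = ln (x * y) / 2"
  have "(exp u)\<^sup>2 = x * y"
    using x y by (simp add: u_def power2_eq_square exp_add[symmetric])
  then have "sqrt (x * y) = exp u" by (simp add: real_sqrt_unique)
  then have am_gm: "2 * exp u \<le> x + y"
    using arith_geo_mean_sqrt[of x y] x y by simp
  have inv: "exp (-2 * u) = 1 / (x * y)"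
    using x y by (simp add: u_def exp_minus inverse_eq_divide)
  have "0 \<le> exp (-2 * u) - 1 + 2 * u"
    using exp_ge_add_one_self[of "-2 * u"] by simp
  moreover have "psi_tilde ln x y = (x + y) * (exp (-2 * u) - 1 + 2 * u)"
    unfolding psi_tilde_ln[OF x y] inv by (simp add: u_def)
  ultimately have lower: "2 * exp u * (exp (-2 * u) - 1 + 2 * u) \<le> psi_tilde ln x y"
    using am_gm by (simp add: mult_right_mono)
  have "(ln x + ln y)\<^sup>2 / 2 = 2 * u\<^sup>2"
    using x y by (simp add: u_def ln_mult power2_eq_square)
  also have "\<dots> \<le> 2 * (exp (-u) - exp u + 2 * u * exp u)"
    using exp_gap_ge_square[of u] by simp
  also have "\<dots> = 2 * exp u * (exp (-2 * u) - 1 + 2 * u)"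
  proof -
    have "exp u * exp (-2 * u) = exp (-u)" by (simp add: exp_add[symmetric])
    then show ?thesis by (simp add: algebra_simps)
  qed
  finally show ?thesis using lower by linarith
qed

lemma C_psi_ln_ge_half: "ereal (1/2) \<le> C_psi ln"
proof (rule C_psi_greatest)
  fix x y :: real
  assume x: "0 < x" and y: "0 < y" and "ln x + ln y \<noteq> 2 * ln 1"
  then have "0 < (ln x + ln y)\<^sup>2" by simp
  with psi_tilde_ln_ge[OF x y]
  show "1/2 \<le> psi_tilde ln x y / (ln x + ln y - 2 * ln 1)\<^sup>2"
    by (simp add: field_simps)
qed

lemma C_psi_ln_le_one: "C_psi ln \<le> 1"
proof -
  have "ln (4::real) = 2 * ln 2"
    using ln_mult[of 2 "2::real"] by simp
  then have half: "psi_tilde ln (1/2) (1/2) / (ln (1/2) + ln (1/2) - 2 * ln 1)\<^sup>2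
      = (3 - 2 * ln 2) / (2 * ln 2)\<^sup>2"
    by (simp add: psi_tilde_ln ln_div power2_eq_square)
  have ln2: "2/3 \<le> ln (2::real)" by (rule ln2_ge_two_thirds)
  then have "(4/3)\<^sup>2 \<le> (2 * ln (2::real))\<^sup>2" by (intro power_mono) auto
  then have "3 - 2 * ln 2 \<le> (2 * ln (2::real))\<^sup>2"
    using ln2 by (simp add: power2_eq_square)
  then have "(3 - 2 * ln 2) / (2 * ln 2)\<^sup>2 \<le> (1::real)"
    using ln2 by simp
  moreover have "C_psi ln \<le> ereal ((3 - 2 * ln 2) / (2 * ln 2)\<^sup>2)"
    using C_psi_le[of "1/2" "1/2" ln] half by simp
  ultimately show ?thesis by (simp add: order.trans)
qed

lemma psi_tilde_sqrt:
  assumes "0 < x" "0 < y"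
  shows "psi_tilde sqrt x y = (sqrt x + sqrt y) * (sqrt x * sqrt y - 1)\<^sup>2 / (2 * sqrt x * sqrt y)"
proof -
  define a b where "a = sqrt x" and "b = sqrt y"
  have a: "0 < a" "x = a\<^sup>2" and b: "0 < b" "y = b\<^sup>2"
    using assms by (auto simp: a_def b_def)
  have "psi_tilde sqrt x y = (inverse a / 2 + inverse b / 2) * (1 - x * y) + x * (b - 1/a) + y * (a - 1/b)"
    unfolding psi_tilde_def using assms
    by (simp add: a_def b_def deriv_sqrt real_sqrt_divide)
  also have "\<dots> = (a + b) * (a * b - 1)\<^sup>2 / (2 * a * b)"
    unfolding a(2) b(2) using a(1) b(1) by (simp add: field_simps power2_eq_square)
  finally show ?thesis by (simp add: a_def b_def)
qed

lemma C_psi_sqrt: "C_psi sqrt = 0"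
proof (rule antisym)
  have roots: "sqrt (4::real) = 2" "sqrt (1/4::real) = 1/2"
    by (simp_all add: real_sqrt_divide real_sqrt_unique)
  show "C_psi sqrt \<le> 0"
    using C_psi_le[of 4 "1/4" sqrt] by (simp add: psi_tilde_sqrt roots zero_ereal_def)
  show "0 \<le> C_psi sqrt"
    unfolding zero_ereal_def by (rule C_psi_greatest) (simp add: psi_tilde_sqrt)
qed

theorem mainTheorem17:
  shows "ereal (1/2) \<le> C_psi ln \<and> C_psi ln \<le> 1 \<and> C_psi sqrt = 0"
  using C_psi_ln_ge_half C_psi_ln_le_one C_psi_sqrt by simp

end
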